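(* Let $H\in\mathbb{R}^{n\times d}$ have rank $h$, $\Sigma\in\mathbb{R}^{n\times n}$ symmetric positive definite, $y\in\mathbb{R}^n$, $J\ge2$, and let $\Gamma_i$ be the empirical covariances of deterministic EKI iterates $$v_{i+1}^{(j)}=v_i^{(j)}+\Gamma_iH^\top(H\Gamma_iH^\top+\Sigma)^{-1}(y-Hv_i^{(j)}).$$ Consider the generalized eigenvalue problem $H\Gamma_iH^\top w=\delta\,\Sigma w$, whose eigenvectors do not depend on $i$ and whose eigenvalue along an eigenvector evolves as $\delta_{\ell,i}$. Then an eigenvalue that is zero at $i=0$ is zero for all $i\ge1$, and an eigenvalue that is positive at $i=0$ is positive for all $i\ge1$. Let $r$ be the number of positive eigenvalues. There is a $\Sigma$-orthogonal basis $\{w_1,\dots,w_n\}$ of $\mathbb{R}^n$ consisting of eigenvectors of this problem such that: (1) $w_1,\dots,w_r\in\mathsf{Ran}(\Sigma^{-1}H)$ have positive eigenvalues $\delta_{1,i},\dots,\delta_{r,i}$, labeled so that $\delta_{1,1}\ge\delta_{2,1}\ge\dots\ge\delta_{r,1}>0$, and this ordering is preserved for all $i\ge1$; (2) if $r<h$, $w_{r+1},\dots,w_h\in\mathsf{Ran}(\Sigma^{-1}H)$ have eigenvalue zero; (3) if $h<n$, $w_{h+1},\dots,w_n\in\mathsf{Ker}(H^\top)$ have eigenvalue zero. Moreover $\mathsf{span}(w_1,\dots,w_h)=\mathsf{Ran}(\Sigma^{-1}H)$ and $\mathsf{span}(w_{h+1},\dots,w_n)=\mathsf{Ker}(H^\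top)$.
   Context: Empirical covariance $\Gamma_i=\frac1{J-1}\sum_j(v_i^{(j)}-\bar v_i)(v_i^{(j)}-\bar v_i)^\top$, $\bar v_i=\frac1J\sum_jv_i^{(j)}$. $\Sigma$-orthogonal means $w_k^\top\Sigma w_l=0$ for $k\ne l$. *)

theory Defs
  imports "HOL-Analysis.Analysis"
begin

definition spd :: "real^'n^'n \<Rightarrow> bool" where
  "spd S \<longleftrightarrow> transpose S = S \<and> (\<forall>x. x \<noteq> 0 \<longrightarrow> x \<bullet> (S *v x) > 0)"

definition outer :: "real^'a \<Rightarrow> real^'b \<Rightarrow> real^'b^'a" where
  "outer x z = (\<chi> a b. x $ a * z $ b)"

definition ens_mean :: "('j::finite \<Rightarrow> real^'d) \<Rightarrow> real^'d" where
  "ens_mean v = (1 / real CARD('j)) *\<^sub>R (\<Sum>j\<in>UNIV. v j)"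

definition emp_cov :: "('j::finite \<Rightarrow> real^'d) \<Rightarrow> real^'d^'d" where
  "emp_cov v = (1 / (real CARD('j) - 1)) *\<^sub>R
     (\<Sum>j\<in>UNIV. outer (v j - ens_mean v) (v j - ens_mean v))"

primrec eki :: "real^'d^'n \<Rightarrow> real^'n^'n \<Rightarrow> real^'n \<Rightarrow> ('j::finite \<Rightarrow> real^'d)
                 \<Rightarrow> nat \<Rightarrow> 'j \<Rightarrow> real^'d" where
  "eki H S y v0 0 = v0"
| "eki H S y v0 (Suc i) =
     (\<lambda>j. eki H S y v0 i j +
          (emp_cov (eki H S y v0 i) ** transpose H **
           matrix_inv (H ** emp_cov (eki H S y v0 i) ** transpose H + S))
          *v (y - H *v eki H S y v0 i j))"

definition eki_cov :: "real^'d^'n \<Rightarrow> real^'n^'n \<Rightarrow> real^'n \<Rightarrow> ('j::finite \<Rightarrow> real^'d)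
                 \<Rightarrow> nat \<Rightarrow> real^'d^'d" where
  "eki_cov H S y v0 i = emp_cov (eki H S y v0 i)"

end

(* Write C_i = H Gamma_i H^T and M_i = C_i + Sigma.  The EKI update moves every ensemble
   deviation by I - K_i H, so Gamma_(i+1) = (I - K_i H) Gamma_i (I - K_i H)^T, and since
   H K_i = C_i M_i^-1 this gives C_(i+1) = N_i C_i N_i^T with N_i = I - C_i M_i^-1.  If
   C_i w = delta Sigma w then M_i w = (1 + delta) Sigma w, hence N_i^T w = w / (1 + delta) and
   N_i Sigma w = Sigma w / (1 + delta): w stays a generalized eigenvector, and its eigenvalue
   evolves by delta |-> delta / (1 + delta)^2, which fixes 0 and preserves positivity.

   Because C_0 = H Gamma_0 H^T, the operator Sigma^-1 C_0 maps everything into Ran(Sigma^-1 H)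
   and annihilates Ker(H^T); these subspaces are Sigma-orthogonal, of dimensions h and n - h.
   On each of them a Sigma-orthogonal eigenbasis is built by maximising the generalized
   Rayleigh quotient and recursing on the Sigma-orthogonal complement of the maximiser.
   Finally delta |-> delta / (1 + delta)^2 maps [0, oo) into [0, 1/4] and is increasing on
   [0, 1], so sorting the basis of Ran(Sigma^-1 H) by the eigenvalues after one step fixes
   the order for all later steps. *)

theory Submission
  imports Defs
begin

declare transpose_matrix_vector [simp del]

lemma invertible_matrix_inv:
  fixes A :: "real^'n^'n"
  assumes "invertible A"
  shows "A ** matrix_inv A = mat 1" and "matrix_inv A ** A = mat 1"
  using someI_ex[OF assms[unfolded invertible_def]] unfolding matrix_inv_def by auto

lemma matrix_inv_mulv_cancel:
  fixes A :: "real^'n^'n"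
  assumes "invertible A"
  shows "A *v (matrix_inv A *v x) = x" and "matrix_inv A *v (A *v x) = x"
  by (simp_all add: matrix_vector_mul_assoc invertible_matrix_inv[OF assms])

lemma invertible_matrix_inv_invertible:
  fixes A :: "real^'n^'n"
  shows "invertible A \<Longrightarrow> invertible (matrix_inv A)"
  using invertible_matrix_inv unfolding invertible_def by blast

lemma transpose_matrix_inv_symmetric:
  fixes A :: "real^'n^'n"
  assumes "invertible A" and "transpose A = A"
  shows "transpose (matrix_inv A) = matrix_inv A"
proof -
  have left_inv: "transpose (matrix_inv A) ** A = mat 1"
    by (metis assms invertible_matrix_inv(1) matrix_transpose_mul transpose_mat)
  have "transpose (matrix_inv A) = (transpose (matrix_inv A) ** A) ** matrix_inv A"
    by (simp add: invertible_matrix_inv[OF assms(1)] flip: matrix_mul_assoc)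
  then show ?thesis
    by (simp add: left_inv)
qed

lemma transpose_add: "transpose (A + B) = transpose A + transpose B"
  by (simp add: transpose_def vec_eq_iff)

lemma transpose_diff: "transpose (A - B) = transpose A - transpose (B :: 'a::ab_group_add^'n^'m)"
  by (simp add: transpose_def vec_eq_iff)

lemma inner_transpose_mulv: "x \<bullet> (transpose A *v z) = (A *v x) \<bullet> (z :: real^'m)"
  by (metis dot_lmul_matrix transpose_matrix_vector inner_commute)

lemma inner_symmetric_mulv: "transpose A = A \<Longrightarrow> x \<bullet> (A *v z) = (A *v x) \<bullet> (z :: real^'n)"
  by (metis inner_transpose_mulv)

lemma sum_matrix_mulv: "(\<Sum>i\<in>I. A i) *v x = (\<Sum>i\<in>I. A i *v (x :: real^'n))"
  by (simp add: matrix_vector_mult_def vec_eq_iff sum_distrib_right) (use sum.swap in fastforce)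

lemma scaleR_matrix_mulv: "(c *\<^sub>R A) *v x = c *\<^sub>R (A *v (x :: real^'n))"
  by (simp add: matrix_vector_mult_def vec_eq_iff sum_distrib_left mult_ac)

lemma rank_invertible_mul_left:
  fixes A :: "real^'n^'n" and B :: "real^'m^'n"
  assumes "invertible A"
  shows "rank (A ** B) = rank B"
proof (rule antisym)
  have "rank B = rank (matrix_inv A ** (A ** B))"
    by (simp add: matrix_mul_assoc invertible_matrix_inv[OF assms])
  then show "rank B \<le> rank (A ** B)"
    using rank_mul_le_right by metis
qed (rule rank_mul_le_right)

lemma dim_null_space_transpose:
  fixes H :: "real^'d^'n"
  shows "dim {w. transpose H *v w = 0} + rank H = CARD('n)"
proof -
  have "{w. transpose H *v w = 0} = {w \<in> UNIV. \<forall>x \<in> range ((*v) H). orthogonal x w}"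
  proof (intro set_eqI iffI; simp)
    fix w
    assume "\<forall>x. orthogonal (H *v x) w"
    then have "(transpose H *v w) \<bullet> (transpose H *v w) = 0"
      by (simp add: inner_transpose_mulv orthogonal_def)
    then show "transpose H *v w = 0"
      by simp
  qed (simp add: orthogonal_def flip: inner_transpose_mulv)
  moreover have "subspace (range ((*v) H))"
    by (intro linear_subspace_image subspace_UNIV matrix_vector_mul_linear)
  ultimately show ?thesis
    using dim_subspace_orthogonal_to_vectors[of "range ((*v) H)" UNIV]
    by (simp add: rank_dim_range)
qed

definition psd :: "real^'n^'n \<Rightarrow> bool" where
  "psd C \<longleftrightarrow> transpose C = C \<and> (\<forall>x. 0 \<le> x \<bullet> (C *v x))"

lemma spd_pos: "spd S \<Longrightarrow> x \<noteq> 0 \<Longrightarrow> 0 < x \<bullet> (S *v x)"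
  by (simp add: spd_def)

lemma spd_inner_commute: "spd S \<Longrightarrow> x \<bullet> (S *v z) = z \<bullet> (S *v x)"
  by (metis spd_def inner_commute inner_symmetric_mulv)

lemma spd_invertible:
  assumes "spd S"
  shows "invertible S"
proof -
  have "inj ((*v) S)"
  proof (rule injI)
    fix x z
    assume "S *v x = S *v z"
    then have "(x - z) \<bullet> (S *v (x - z)) = 0"
      by (simp add: matrix_vector_mult_diff_distrib)
    then show "x = z"
      using assms unfolding spd_def by (metis eq_iff_diff_eq_0 less_irrefl)
  qed
  then show ?thesis
    using invertible_left_inverse matrix_left_invertible_injective by blast
qed

lemma spd_add_psd: "psd C \<Longrightarrow> spd S \<Longrightarrow> spd (C + S)"
  unfolding psd_def spd_def
  by (simp add: transpose_add matrix_vector_mult_add_rdistrib inner_add_right add_nonneg_pos)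

lemma psd_congruence:
  assumes "psd G"
  shows "psd (A ** G ** transpose A)"
proof -
  have "x \<bullet> ((A ** G ** transpose A) *v x) = (transpose A *v x) \<bullet> (G *v (transpose A *v x))" for x
    by (simp only: inner_transpose_mulv[symmetric] matrix_vector_mul_assoc[symmetric]) simp
  then show ?thesis
    using assms unfolding psd_def by (simp add: matrix_transpose_mul matrix_mul_assoc)
qed

lemma psd_gen_eigenvalue_nonneg:
  assumes "psd C" and "spd S" and "x \<noteq> 0" and "C *v x = \<delta> *\<^sub>R (S *v x)"
  shows "0 \<le> \<delta>"
proof -
  have "0 \<le> \<delta> * (x \<bullet> (S *v x))"
    using assms(1,4) unfolding psd_def by (metis inner_scaleR_right)
  moreover have "0 < x \<bullet> (S *v x)"
    using assms(2,3) unfolding spd_def by blast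
  ultimately show ?thesis
    by (simp add: zero_le_mult_iff)
qed

lemma outer_mulv: "outer x z *v u = (z \<bullet> u) *\<^sub>R x"
  by (simp add: outer_def matrix_vector_mult_def inner_vec_def vec_eq_iff sum_distrib_left mult_ac)

lemma emp_cov_mulv:
  fixes v :: "'j::finite \<Rightarrow> real^'d"
  shows "emp_cov v *v z = (1 / (real CARD('j) - 1)) *\<^sub>R
           (\<Sum>j\<in>UNIV. ((v j - ens_mean v) \<bullet> z) *\<^sub>R (v j - ens_mean v))"
  unfolding emp_cov_def scaleR_matrix_mulv sum_matrix_mulv outer_mulv ..

lemma psd_emp_cov:
  fixes v :: "'j::finite \<Rightarrow> real^'d"
  shows "psd (emp_cov v)"
proof -
  have "x \<bullet> (emp_cov v *v x) = (1 / (real CARD('j) - 1)) * (\<Sum>j\<in>UNIV. ((v j - ens_mean v) \<bullet> x)\<^sup>2)"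
    for x
    by (simp add: emp_cov_mulv inner_sum_right power2_eq_square inner_commute)
  moreover have "0 \<le> 1 / (real CARD('j) - 1)"
    by (simp add: Suc_leI)
  moreover have "transpose (emp_cov v) = emp_cov v"
    by (simp add: emp_cov_def outer_def transpose_def vec_eq_iff mult.commute)
  ultimately show ?thesis
    unfolding psd_def by (simp add: sum_nonneg)
qed

lemma ens_mean_affine:
  fixes v :: "'j::finite \<Rightarrow> real^'d"
  shows "ens_mean (\<lambda>j. A *v v j + b) = A *v ens_mean v + b"
proof -
  have "(\<Sum>j\<in>UNIV. A *v v j + b) = A *v (\<Sum>j\<in>UNIV. v j) + real CARD('j) *\<^sub>R b"
    by (simp add: sum.distrib linear_sum[of "(*v) A"] scaleR_conv_of_real)
  then show ?thesis
    by (simp add: ens_mean_def matrix_vector_mult_scaleR scaleR_add_right)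
qed

lemma emp_cov_affine:
  fixes v :: "'j::finite \<Rightarrow> real^'d"
  shows "emp_cov (\<lambda>j. A *v v j + b) = A ** emp_cov v ** transpose A"
proof -
  have "emp_cov (\<lambda>j. A *v v j + b) *v z = (A ** emp_cov v ** transpose A) *v z" for z
    by (simp add: emp_cov_mulv ens_mean_affine inner_transpose_mulv matrix_vector_mult_diff_distrib
        linear_sum[of "(*v) A"] matrix_vector_mult_scaleR flip: matrix_vector_mul_assoc)
  then show ?thesis
    by (simp add: matrix_eq)
qed

definition eki_eig_map :: "real \<Rightarrow> real" where
  "eki_eig_map \<delta> = \<delta> / (1 + \<delta>)\<^sup>2"

lemma eki_eig_map_nonneg: "0 \<le> x \<Longrightarrow> 0 \<le> eki_eig_map x"
  by (simp add: eki_eig_map_def)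

lemma eki_eig_map_pos_iff: "0 \<le> x \<Longrightarrow> 0 < eki_eig_map x \<longleftrightarrow> 0 < x"
  by (auto simp: eki_eig_map_def zero_less_divide_iff)

lemma eki_eig_map_le_one:
  assumes "0 \<le> x"
  shows "eki_eig_map x \<le> 1"
proof -
  have "x \<le> (1 + x)\<^sup>2"
    using assms by (simp add: power2_eq_square algebra_simps)
  then show ?thesis
    using assms by (simp add: eki_eig_map_def divide_le_eq)
qed

lemma eki_eig_map_mono:
  assumes "0 \<le> x" and "x \<le> y" and "y \<le> 1"
  shows "eki_eig_map x \<le> eki_eig_map y"
proof -
  have "0 \<le> (y - x) * (1 - x * y)"
    using assms mult_le_one[of x y] by simp
  also have "(y - x) * (1 - x * y) = y * (1 + x)\<^sup>2 - x * (1 + y)\<^sup>2"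
    by (simp add: power2_eq_square algebra_simps)
  finally show ?thesis
    using assms by (simp add: eki_eig_map_def frac_le_eq field_simps)
qed

lemma funpow_eki_eig_map_zero: "(eki_eig_map ^^ i) 0 = 0"
  by (induction i) (simp_all add: eki_eig_map_def)

lemma funpow_eki_eig_map_pos: "0 < x \<Longrightarrow> 0 < (eki_eig_map ^^ i) x"
  by (induction i) (simp_all add: eki_eig_map_def)

lemma funpow_eki_eig_map_mono:
  "0 \<le> x \<Longrightarrow> x \<le> y \<Longrightarrow> y \<le> 1 \<Longrightarrow> (eki_eig_map ^^ i) x \<le> (eki_eig_map ^^ i) y"
proof (induction i arbitrary: x y)
  case (Suc i)
  then show ?case
    unfolding funpow_Suc_right o_apply
    by (intro Suc.IH eki_eig_map_nonneg eki_eig_map_mono eki_eig_map_le_one) simp_all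
qed simp

lemma funpow_eki_eig_map_order:
  assumes "0 \<le> x" and "0 \<le> y" and "eki_eig_map x \<le> eki_eig_map y" and "1 \<le> i"
  shows "(eki_eig_map ^^ i) x \<le> (eki_eig_map ^^ i) y"
proof -
  obtain m where i: "i = Suc m"
    using assms(4) by (cases i) auto
  show ?thesis
    unfolding i funpow_Suc_right o_apply
    by (rule funpow_eki_eig_map_mono) (simp_all add: assms eki_eig_map_nonneg eki_eig_map_le_one)
qed

lemma gen_eigvec_update:
  fixes C S :: "real^'n^'n"
  assumes C: "transpose C = C" and S: "transpose S = S" and M: "invertible (C + S)"
    and eig: "C *v w = \<delta> *\<^sub>R (S *v w)" and nz: "1 + \<delta> \<noteq> 0"
  defines "N \<equiv> mat 1 - C ** matrix_inv (C + S)"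
  shows "(N ** C ** transpose N) *v w = (\<delta> / (1 + \<delta>)\<^sup>2) *\<^sub>R (S *v w)"
proof -
  define Mi where "Mi = matrix_inv (C + S)"
  have "transpose (C + S) = C + S"
    using C S by (simp add: transpose_add)
  then have NT: "transpose N = mat 1 - Mi ** C"
    unfolding N_def Mi_def
    by (simp add: transpose_diff matrix_transpose_mul C transpose_matrix_inv_symmetric[OF M])
  have "(C + S) *v w = (1 + \<delta>) *\<^sub>R (S *v w)"
    by (simp add: eig algebra_simps)
  then have "w = (1 + \<delta>) *\<^sub>R (Mi *v (S *v w))"
    unfolding Mi_def by (metis matrix_inv_mulv_cancel(2)[OF M] matrix_vector_mult_scaleR)
  then have Mi_Sw: "Mi *v (S *v w) = (1 / (1 + \<delta>)) *\<^sub>R w"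
    using nz by (metis divide_inverse_commute divide_self_if scaleR_one scaleR_scaleR)
  have shrink: "1 - \<delta> / (1 + \<delta>) = 1 / (1 + \<delta>)"
    using nz by (simp add: field_simps)
  have "transpose N *v w = w - (\<delta> / (1 + \<delta>)) *\<^sub>R w"
    by (simp add: NT matrix_vector_mult_diff_rdistrib eig matrix_vector_mult_scaleR Mi_Sw
        flip: matrix_vector_mul_assoc)
  then have NT_w: "transpose N *v w = (1 / (1 + \<delta>)) *\<^sub>R w"
    by (metis scaleR_diff_left scaleR_one shrink)
  have "N *v (S *v w) = S *v w - (\<delta> / (1 + \<delta>)) *\<^sub>R (S *v w)"
    by (simp add: N_def matrix_vector_mult_diff_rdistrib eig matrix_vector_mult_scaleR
        Mi_Sw[unfolded Mi_def] flip: matrix_vector_mul_assoc)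
  then have N_Sw: "N *v (S *v w) = (1 / (1 + \<delta>)) *\<^sub>R (S *v w)"
    by (metis scaleR_diff_left scaleR_one shrink)
  have "(N ** C ** transpose N) *v w = N *v (C *v (transpose N *v w))"
    by (simp only: matrix_vector_mul_assoc matrix_mul_assoc)
  also have "\<dots> = (\<delta> / (1 + \<delta>)) *\<^sub>R (N *v (S *v w))"
    by (simp add: NT_w eig matrix_vector_mult_scaleR)
  also have "\<dots> = (\<delta> / (1 + \<delta>)\<^sup>2) *\<^sub>R (S *v w)"
    by (simp add: N_Sw power2_eq_square)
  finally show ?thesis .
qed

lemma eki_cov_Suc:
  fixes H :: "real^'d^'n" and S :: "real^'n^'n" and y :: "real^'n"
    and v0 :: "'j::finite \<Rightarrow> real^'d" and i :: nat
  defines "\<Gamma> \<equiv> eki_cov H S y v0"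
  defines "K \<equiv> \<Gamma> i ** transpose H ** matrix_inv (H ** \<Gamma> i ** transpose H + S)"
  shows "\<Gamma> (Suc i) = (mat 1 - K ** H) ** \<Gamma> i ** transpose (mat 1 - K ** H)"
proof -
  have "eki H S y v0 (Suc i) = (\<lambda>j. (mat 1 - K ** H) *v eki H S y v0 i j + K *v y)"
    by (simp add: K_def \<Gamma>_def eki_cov_def fun_eq_iff matrix_vector_mult_diff_rdistrib
        matrix_vector_mult_diff_distrib matrix_vector_mul_assoc)
  then show ?thesis
    by (simp add: \<Gamma>_def eki_cov_def emp_cov_affine)
qed

lemma eki_obs_cov_Suc:
  fixes H :: "real^'d^'n" and S :: "real^'n^'n" and y :: "real^'n"
    and v0 :: "'j::finite \<Rightarrow> real^'d" and i :: nat
  defines "C \<equiv> \<lambda>i. H ** eki_cov H S y v0 i ** transpose H"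
  defines "N \<equiv> mat 1 - C i ** matrix_inv (C i + S)"
  shows "C (Suc i) = N ** C i ** transpose N"
proof -
  define K where "K = eki_cov H S y v0 i ** transpose H ** matrix_inv (C i + S)"
  \<comment> \<open>\<open>H ** K = C i ** matrix_inv (C i + S)\<close>\<close>
  have "H ** (mat 1 - K ** H) = N ** H"
    by (simp add: matrix_eq N_def K_def C_def matrix_vector_mult_diff_rdistrib
        matrix_vector_mult_diff_distrib flip: matrix_vector_mul_assoc)
  then show ?thesis
    using eki_cov_Suc[of H S y v0 i]
    by (simp add: C_def K_def matrix_mul_assoc matrix_transpose_mul)
       (metis matrix_mul_assoc matrix_transpose_mul)
qed

lemma eki_gen_eig_evolution:
  fixes H :: "real^'d^'n" and S :: "real^'n^'n" and y :: "real^'n"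
    and v0 :: "'j::finite \<Rightarrow> real^'d" and i :: nat
  defines "C \<equiv> \<lambda>i. H ** eki_cov H S y v0 i ** transpose H"
  assumes S: "spd S" and "w \<noteq> 0" and "C 0 *v w = \<delta> *\<^sub>R (S *v w)"
  shows "C i *v w = (eki_eig_map ^^ i) \<delta> *\<^sub>R (S *v w)"
proof (induction i)
  case 0
  then show ?case using assms by simp
next
  case (Suc i)
  have psd: "psd (C i)"
    unfolding C_def eki_cov_def by (intro psd_congruence psd_emp_cov)
  then have "0 \<le> (eki_eig_map ^^ i) \<delta>"
    using psd_gen_eigenvalue_nonneg S \<open>w \<noteq> 0\<close> Suc.IH by blast
  moreover have "invertible (C i + S)"
    by (intro spd_invertible spd_add_psd psd S)
  ultimately show ?case
    unfolding C_def eki_obs_cov_Suc funpow.simps o_apply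
      eki_eig_map_def[of "(eki_eig_map ^^ i) \<delta>"]
    by (intro gen_eigvec_update)
       (use psd S Suc.IH in \<open>auto simp: C_def psd_def spd_def\<close>)
qed

lemma eki_gen_eigenvalue_persistence:
  fixes H :: "real^'d^'n" and S :: "real^'n^'n" and y :: "real^'n"
    and v0 :: "'j::finite \<Rightarrow> real^'d"
  assumes "spd S" and "w \<noteq> 0"
    and "(H ** eki_cov H S y v0 0 ** transpose H) *v w = \<delta>0 *\<^sub>R (S *v w)"
  shows "\<exists>\<delta>::nat \<Rightarrow> real. \<delta> 0 = \<delta>0 \<and>
           (\<forall>i. (H ** eki_cov H S y v0 i ** transpose H) *v w = \<delta> i *\<^sub>R (S *v w)) \<and>
           (\<delta>0 = 0 \<longrightarrow> (\<forall>i\<ge>1. \<delta> i = 0)) \<and>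
           (\<delta>0 > 0 \<longrightarrow> (\<forall>i\<ge>1. \<delta> i > 0))"
  using eki_gen_eig_evolution[OF assms] funpow_eki_eig_map_zero funpow_eki_eig_map_pos
  by (intro exI[of _ "\<lambda>i. (eki_eig_map ^^ i) \<delta>0"]) auto

definition gen_rayleigh :: "real^'n^'n \<Rightarrow> real^'n^'n \<Rightarrow> real^'n \<Rightarrow> real" where
  "gen_rayleigh C S x = (x \<bullet> (C *v x)) / (x \<bullet> (S *v x))"

lemma gen_rayleigh_scaleR: "c \<noteq> 0 \<Longrightarrow> gen_rayleigh C S (c *\<^sub>R x) = gen_rayleigh C S x"
  by (simp add: gen_rayleigh_def matrix_vector_mult_scaleR)

lemma nonneg_quadratic_imp_linear_coeff_zero:
  fixes a b :: real
  assumes "\<And>t. 0 \<le> 2 * t * a + t\<^sup>2 * b"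
  shows "a = 0"
proof -
  define s where "s = 1 / (\<bar>b\<bar> + 1)"
  have s: "0 < s" "s * b < 2"
    using abs_ge_self[of b] by (simp_all add: s_def add_nonneg_pos divide_less_eq)
  have "0 \<le> 2 * (- s * a) * a + (- s * a)\<^sup>2 * b"
    by (rule assms)
  also have "\<dots> = a\<^sup>2 * (s * (s * b - 2))"
    by (simp add: power2_eq_square algebra_simps)
  finally show ?thesis
    using s by (simp add: zero_le_mult_iff)
qed

lemma quadratic_form_null_vector_orthogonal:
  fixes Q :: "real^'n^'n"
  assumes Q: "transpose Q = Q" and V: "subspace V" and nonneg: "\<And>z. z \<in> V \<Longrightarrow> 0 \<le> z \<bullet> (Q *v z)"
    and x: "x \<in> V" "x \<bullet> (Q *v x) = 0" and z: "z \<in> V"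
  shows "z \<bullet> (Q *v x) = 0"
proof (rule nonneg_quadratic_imp_linear_coeff_zero)
  fix t
  have sym: "x \<bullet> (Q *v z) = z \<bullet> (Q *v x)"
    by (metis Q inner_commute inner_symmetric_mulv)
  have "0 \<le> (x + t *\<^sub>R z) \<bullet> (Q *v (x + t *\<^sub>R z))"
    using V x z by (simp add: nonneg subspace_add subspace_scale)
  also have "\<dots> = 2 * t * (z \<bullet> (Q *v x)) + t\<^sup>2 * (z \<bullet> (Q *v z))"
    by (simp add: sym x(2) power2_eq_square algebra_simps)
  finally show "0 \<le> 2 * t * (z \<bullet> (Q *v x)) + t\<^sup>2 * (z \<bullet> (Q *v z))" .
qed

lemma gen_rayleigh_attains_max:
  fixes C S :: "real^'n^'n"
  assumes S: "spd S" and V: "subspace V" and x0: "x0 \<in> V" "x0 \<noteq> 0"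
  obtains x where "x \<in> V" "x \<noteq> 0"
    and "\<And>z. z \<in> V \<Longrightarrow> z \<bullet> (C *v z) \<le> gen_rayleigh C S x * (z \<bullet> (S *v z))"
proof -
  define K where "K = V \<inter> sphere 0 1"
  have normalize: "(1 / norm z) *\<^sub>R z \<in> K" if "z \<in> V" "z \<noteq> 0" for z
    using that subspace_scale[OF V] by (simp add: K_def)
  have "compact K"
    unfolding K_def by (intro closed_Int_compact closed_subspace V compact_sphere)
  have "K \<noteq> {}"
    using normalize[OF x0] by blast
  have cont: "continuous_on K (gen_rayleigh C S)"
  proof -
    have "z \<bullet> (S *v z) \<noteq> 0" if "z \<in> K" for z
    proof -
      have "z \<noteq> 0"
        using that by (auto simp: K_def)
      then show ?thesis
        using spd_pos[OF S] by fastforce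
    qed
    then show ?thesis
      unfolding gen_rayleigh_def by (intro continuous_intros) auto
  qed
  obtain x where x: "x \<in> K"
    and max: "\<And>z. z \<in> K \<Longrightarrow> gen_rayleigh C S z \<le> gen_rayleigh C S x"
    using continuous_attains_sup[OF \<open>compact K\<close> \<open>K \<noteq> {}\<close> cont] by auto
  show thesis
  proof (rule that)
    show "x \<in> V" "x \<noteq> 0"
      using x by (auto simp: K_def)
  next
    fix z
    assume "z \<in> V"
    show "z \<bullet> (C *v z) \<le> gen_rayleigh C S x * (z \<bullet> (S *v z))"
    proof (cases "z = 0")
      case False
      then have "gen_rayleigh C S z \<le> gen_rayleigh C S x"
        using max[OF normalize[OF \<open>z \<in> V\<close>]] by (simp add: gen_rayleigh_scaleR)
      moreover have "0 < z \<bullet> (S *v z)"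
        using spd_pos[OF S False] .
      ultimately show ?thesis
        by (simp add: gen_rayleigh_def divide_le_eq)
    qed simp
  qed
qed

lemma gen_eigvec_exists:
  fixes C S :: "real^'n^'n"
  assumes S: "spd S" and C: "transpose C = C" and V: "subspace V"
    and inv: "\<And>x. x \<in> V \<Longrightarrow> matrix_inv S *v (C *v x) \<in> V" and x0: "x0 \<in> V" "x0 \<noteq> 0"
  obtains x where "x \<in> V" "x \<noteq> 0" "C *v x = gen_rayleigh C S x *\<^sub>R (S *v x)"
proof -
  obtain x where x: "x \<in> V" "x \<noteq> 0"
    and max: "\<And>z. z \<in> V \<Longrightarrow> z \<bullet> (C *v z) \<le> gen_rayleigh C S x * (z \<bullet> (S *v z))"
    using gen_rayleigh_attains_max[OF S V x0] by blast
  \<comment> \<open>\<open>Q\<close> is positive semidefinite on \<open>V\<close> and \<open>x\<close> is a null vector of it, so \<open>Q *v x\<close> is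
    orthogonal to \<open>V\<close>; as \<open>matrix_inv S *v (Q *v x) \<in> V\<close>, this forces \<open>Q *v x = 0\<close>.\<close>
  define Q where "Q = gen_rayleigh C S x *\<^sub>R S - C"
  have Q_mulv: "Q *v z = gen_rayleigh C S x *\<^sub>R (S *v z) - C *v z" for z
    by (simp add: Q_def matrix_vector_mult_diff_rdistrib scaleR_matrix_mulv)
  have Q_sym: "transpose Q = Q"
    using S C by (simp add: Q_def spd_def transpose_diff transpose_scalar)
  have Q_nonneg: "0 \<le> z \<bullet> (Q *v z)" if "z \<in> V" for z
    using max[OF that] by (simp add: Q_mulv inner_diff_right)
  have Q_x: "x \<bullet> (Q *v x) = 0"
    using spd_pos[OF S x(2)] by (simp add: Q_mulv inner_diff_right gen_rayleigh_def)
  define u where "u = matrix_inv S *v (Q *v x)"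
  have S_u: "S *v u = Q *v x"
    unfolding u_def by (rule matrix_inv_mulv_cancel(1)[OF spd_invertible[OF S]])
  have "u = gen_rayleigh C S x *\<^sub>R x - matrix_inv S *v (C *v x)"
    by (simp add: u_def Q_mulv matrix_vector_mult_diff_distrib matrix_vector_mult_scaleR
        matrix_inv_mulv_cancel(2)[OF spd_invertible[OF S]])
  then have "u \<in> V"
    using V x(1) inv by (simp add: subspace_diff subspace_scale)
  then have "u \<bullet> (S *v u) = 0"
    unfolding S_u using quadratic_form_null_vector_orthogonal[OF Q_sym V Q_nonneg x(1) Q_x] by simp
  then have "u = 0"
    using spd_pos[OF S] by fastforce
  then have "C *v x = gen_rayleigh C S x *\<^sub>R (S *v x)"
    using S_u by (simp add: Q_mulv)
  then show thesis
    by (rule that[OF x])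
qed

lemma gen_eigvec_orthogonal_complement_invariant:
  fixes C S :: "real^'n^'n"
  assumes S: "spd S" and C: "transpose C = C" and eig: "C *v x = \<delta> *\<^sub>R (S *v x)"
    and "(S *v x) \<bullet> z = 0"
  shows "(S *v x) \<bullet> (matrix_inv S *v (C *v z)) = 0"
proof -
  have "(S *v x) \<bullet> (matrix_inv S *v (C *v z)) = x \<bullet> (C *v z)"
    using S by (simp add: spd_def matrix_inv_mulv_cancel(1)[OF spd_invertible[OF S]]
        flip: inner_symmetric_mulv)
  also have "\<dots> = \<delta> * ((S *v x) \<bullet> z)"
    by (simp add: inner_symmetric_mulv[OF C] eig)
  finally show ?thesis
    using assms(4) by simp
qed

lemma span_insert_hyperplane_section:
  assumes V: "subspace V" and x: "x \<in> V" "a \<bullet> x \<noteq> 0" and B: "span B = V \<inter> {z. a \<bullet> z = 0}"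
  shows "span (insert x B) = V"
proof (intro set_eqI iffI)
  fix z
  assume "z \<in> span (insert x B)"
  then obtain k where "z - k *\<^sub>R x \<in> V"
    unfolding span_insert B by auto
  then show "z \<in> V"
    using V x(1) by (metis diff_add_cancel subspace_add subspace_scale)
next
  fix z
  assume "z \<in> V"
  then have "z - ((a \<bullet> z) / (a \<bullet> x)) *\<^sub>R x \<in> V \<inter> {z. a \<bullet> z = 0}"
    using V x by (simp add: subspace_diff subspace_scale inner_diff_right)
  then show "z \<in> span (insert x B)"
    unfolding span_insert B by blast
qed

definition gen_eigenbasis :: "real^'n^'n \<Rightarrow> real^'n^'n \<Rightarrow> (real^'n) set \<Rightarrow> (real^'n) set \<Rightarrow> bool"
  where "gen_eigenbasis C S V B \<longleftrightarrow> finite B \<and> B \<subseteq> V \<and> span B = V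
    \<and> (\<forall>x\<in>B. x \<noteq> 0 \<and> C *v x = gen_rayleigh C S x *\<^sub>R (S *v x))
    \<and> pairwise (\<lambda>x z. x \<bullet> (S *v z) = 0) B"

lemma gen_eigenbasis_insert:
  fixes C S :: "real^'n^'n"
  assumes S: "spd S" and V: "subspace V" and x: "x \<in> V" "x \<noteq> 0"
    and eig: "C *v x = gen_rayleigh C S x *\<^sub>R (S *v x)"
    and B: "gen_eigenbasis C S (V \<inter> {z. (S *v x) \<bullet> z = 0}) B"
  shows "gen_eigenbasis C S V (insert x B)"
proof -
  have "0 < (S *v x) \<bullet> x"
    using spd_pos[OF S x(2)] by (simp add: inner_commute)
  then have "span (insert x B) = V"
    using V x(1) B by (intro span_insert_hyperplane_section) (simp_all add: gen_eigenbasis_def)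
  moreover have "b \<bullet> (S *v x) = 0 \<and> x \<bullet> (S *v b) = 0" if "b \<in> B" for b
    using that B spd_inner_commute[OF S, of x b] by (auto simp: gen_eigenbasis_def inner_commute)
  ultimately show ?thesis
    using B x eig by (auto simp: gen_eigenbasis_def pairwise_insert)
qed

lemma gen_eigenbasis_exists:
  fixes C S :: "real^'n^'n"
  assumes S: "spd S" and C: "transpose C = C"
  shows "subspace V \<Longrightarrow> (\<And>x. x \<in> V \<Longrightarrow> matrix_inv S *v (C *v x) \<in> V) \<Longrightarrow>
    \<exists>B. gen_eigenbasis C S V B"
proof (induction "dim V" arbitrary: V rule: less_induct)
  case less
  show ?case
  proof (cases "V = {0}")
    case True
    then show ?thesis
      by (intro exI[of _ "{}"]) (simp add: gen_eigenbasis_def)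
  next
    case False
    then obtain x0 where "x0 \<in> V" "x0 \<noteq> 0"
      using subspace_0[OF less.prems(1)] by auto
    then obtain x where x: "x \<in> V" "x \<noteq> 0" and eig: "C *v x = gen_rayleigh C S x *\<^sub>R (S *v x)"
      using gen_eigvec_exists[OF S C less.prems] by metis
    define V' where "V' = V \<inter> {z. (S *v x) \<bullet> z = 0}"
    have V': "subspace V'"
      unfolding V'_def by (intro subspace_inter less.prems(1) subspace_hyperplane)
    have inv': "matrix_inv S *v (C *v z) \<in> V'" if "z \<in> V'" for z
      using that less.prems(2) gen_eigvec_orthogonal_complement_invariant[OF S C eig, of z]
      by (simp add: V'_def)
    have "x \<notin> V'"
      using spd_pos[OF S x(2)] by (simp add: V'_def inner_commute)
    then have "V' \<subset> V"
      using x(1) unfolding V'_def by blast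
    then have "dim V' < dim V"
      using dim_psubset[of V' V] span_eq_iff[THEN iffD2, OF V']
        span_eq_iff[THEN iffD2, OF less.prems(1)] by simp
    then have "\<exists>B'. gen_eigenbasis C S V' B'"
      using V' inv' by (rule less.hyps)
    then show ?thesis
      using gen_eigenbasis_insert[OF S less.prems(1) x eig] unfolding V'_def by blast
  qed
qed

lemma sigma_orthogonal_independent:
  fixes S :: "real^'n^'n"
  assumes S: "spd S" and fin: "finite B" and "0 \<notin> B"
    and orth: "pairwise (\<lambda>x z. x \<bullet> (S *v z) = 0) B"
  shows "independent B"
proof (rule independent_if_scalars_zero[OF fin])
  fix u v
  assume sum0: "(\<Sum>t\<in>B. u t *\<^sub>R t) = 0" and v: "v \<in> B"
  have "v \<bullet> (S *v t) = 0" if "t \<in> B - {v}" for t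
    using that v by (intro pairwiseD(1)[OF orth]) auto
  then have "(\<Sum>t\<in>B. u t * (v \<bullet> (S *v t))) = u v * (v \<bullet> (S *v v))"
    by (simp add: sum.remove[OF fin v])
  moreover have "(\<Sum>t\<in>B. u t * (v \<bullet> (S *v t))) = v \<bullet> (S *v (\<Sum>t\<in>B. u t *\<^sub>R t))"
    by (simp add: linear_sum[of "(*v) S"] matrix_vector_mult_scaleR inner_sum_right)
  moreover have "0 < v \<bullet> (S *v v)"
    using v assms(3) spd_pos[OF S, of v] by auto
  ultimately show "u v = 0"
    using sum0 by simp
qed

lemma sigma_orthogonal_range_kernel:
  assumes S: "spd S" and "p \<in> range (\<lambda>x. matrix_inv S *v (H *v x))" and q: "transpose H *v q = 0"
  shows "p \<bullet> (S *v q) = 0"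
proof -
  obtain z where p: "p = matrix_inv S *v (H *v z)"
    using assms(2) by blast
  have "p \<bullet> (S *v q) = (S *v p) \<bullet> q"
    using S by (simp add: spd_def inner_symmetric_mulv)
  also have "\<dots> = z \<bullet> (transpose H *v q)"
    by (simp add: p matrix_inv_mulv_cancel(1)[OF spd_invertible[OF S]] inner_transpose_mulv)
  finally show ?thesis
    using q by simp
qed

lemma dim_range_matrix_inv_mul:
  fixes H :: "real^'d^'n" and S :: "real^'n^'n"
  assumes "invertible S"
  shows "dim (range (\<lambda>x. matrix_inv S *v (H *v x))) = rank H"
  using rank_invertible_mul_left[OF invertible_matrix_inv_invertible[OF assms], of H]
  by (simp add: rank_dim_range matrix_vector_mul_assoc)

lemma pairwise_UnI:
  assumes "pairwise R A" and "pairwise R B" and "\<And>a b. a \<in> A \<Longrightarrow> b \<in> B \<Longrightarrow> R a b \<and> R b a"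
  shows "pairwise R (A \<union> B)"
  using assms unfolding pairwise_def by (metis Un_iff)

lemma sigma_orthogonal_gen_eigenbasis_range_kernel:
  fixes H :: "real^'d^'n" and S :: "real^'n^'n" and G :: "real^'d^'d"
  assumes S: "spd S" and G: "psd G"
  defines "C \<equiv> H ** G ** transpose H"
    and "RanSH \<equiv> range (\<lambda>x. matrix_inv S *v (H *v x))"
    and "KerHT \<equiv> {w. transpose H *v w = 0}"
  obtains B1 B2 where
    "finite B1" "B1 \<subseteq> RanSH" "span B1 = RanSH" "card B1 = rank H"
    "finite B2" "B2 \<subseteq> KerHT" "span B2 = KerHT" "card B2 + rank H = CARD('n)"
    "B1 \<inter> B2 = {}" "pairwise (\<lambda>x z. x \<bullet> (S *v z) = 0) (B1 \<union> B2)"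
    "\<And>x. x \<in> B1 \<union> B2 \<Longrightarrow> x \<noteq> 0 \<and> C *v x = gen_rayleigh C S x *\<^sub>R (S *v x)"
proof -
  have C: "transpose C = C"
    using psd_congruence[OF G, of H] by (simp add: C_def psd_def)
  have "subspace RanSH"
    unfolding RanSH_def matrix_vector_mul_assoc
    by (intro linear_subspace_image subspace_UNIV matrix_vector_mul_linear)
  have "subspace KerHT"
    unfolding KerHT_def by (intro linear_subspace_kernel matrix_vector_mul_linear)
  have "matrix_inv S *v (C *v x) = matrix_inv S *v (H *v ((G ** transpose H) *v x))" for x
    by (simp only: C_def matrix_vector_mul_assoc matrix_mul_assoc)
  then have inv_Ran: "matrix_inv S *v (C *v x) \<in> RanSH" for x
    unfolding RanSH_def by (metis rangeI)
  have C_Ker: "C *v x = 0" if "x \<in> KerHT" for x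
    using that by (simp add: C_def KerHT_def flip: matrix_vector_mul_assoc)
  then have inv_Ker: "matrix_inv S *v (C *v x) \<in> KerHT" if "x \<in> KerHT" for x
    using that by (simp add: KerHT_def)
  have cross: "p \<bullet> (S *v q) = 0 \<and> q \<bullet> (S *v p) = 0" if "p \<in> RanSH" "q \<in> KerHT" for p q
    using that sigma_orthogonal_range_kernel[OF S, of p H q] spd_inner_commute[OF S, of p q]
    by (simp add: RanSH_def KerHT_def)
  obtain B1 B2 where "gen_eigenbasis C S RanSH B1" and "gen_eigenbasis C S KerHT B2"
    using gen_eigenbasis_exists[OF S C \<open>subspace RanSH\<close> inv_Ran]
      gen_eigenbasis_exists[OF S C \<open>subspace KerHT\<close> inv_Ker] by blast
  then have B1: "finite B1" "B1 \<subseteq> RanSH" "span B1 = RanSH"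
      "\<forall>x\<in>B1. x \<noteq> 0 \<and> C *v x = gen_rayleigh C S x *\<^sub>R (S *v x)"
      "pairwise (\<lambda>x z. x \<bullet> (S *v z) = 0) B1"
    and B2: "finite B2" "B2 \<subseteq> KerHT" "span B2 = KerHT"
      "\<forall>x\<in>B2. x \<noteq> 0 \<and> C *v x = gen_rayleigh C S x *\<^sub>R (S *v x)"
      "pairwise (\<lambda>x z. x \<bullet> (S *v z) = 0) B2"
    unfolding gen_eigenbasis_def by blast+
  have "independent B1" "independent B2"
    using B1(4) B2(4) by (intro sigma_orthogonal_independent[OF S] B1(1,5) B2(1,5); blast)+
  have "card B1 = rank H"
    using dim_span_eq_card_independent[OF \<open>independent B1\<close>] B1(3)
      dim_range_matrix_inv_mul[OF spd_invertible[OF S], of H] by (simp add: RanSH_def)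
  moreover have "card B2 + rank H = CARD('n)"
    using dim_span_eq_card_independent[OF \<open>independent B2\<close>] B2(3)
      dim_null_space_transpose[of H] by (simp add: KerHT_def)
  moreover have "B1 \<inter> B2 = {}"
    using B1(2,4) B2(2) cross spd_pos[OF S] by fastforce
  moreover have "pairwise (\<lambda>x z. x \<bullet> (S *v z) = 0) (B1 \<union> B2)"
    using B1(2) B2(2) cross by (intro pairwise_UnI B1(5) B2(5)) blast
  moreover have "x \<noteq> 0 \<and> C *v x = gen_rayleigh C S x *\<^sub>R (S *v x)" if "x \<in> B1 \<union> B2" for x
    using that B1(4) B2(4) by blast
  ultimately show thesis
    by (rule that[OF B1(1-3) _ B2(1-3)])
qed

lemma obtain_sorted_enumeration:
  fixes f :: "'a \<Rightarrow> real"
  assumes "finite A"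
  obtains w where "bij_betw w {..<card A} A"
    and "\<And>k l. k \<le> l \<Longrightarrow> l < card A \<Longrightarrow> f (w l) \<le> f (w k)"
proof -
  obtain xs where xs: "set xs = A" "distinct xs"
    using finite_distinct_list[OF assms] by blast
  define ys where "ys = sort_key (\<lambda>x. - f x) xs"
  have ys: "set ys = A" "distinct ys" "sorted (map (\<lambda>x. - f x) ys)"
    using xs by (simp_all add: ys_def)
  have len: "length ys = card A"
    using distinct_card[OF ys(2)] ys(1) by simp
  show thesis
  proof (rule that)
    show "bij_betw ((!) ys) {..<card A} A"
      using ys len by (intro bij_betw_nth) simp_all
  next
    fix k l
    assume "k \<le> l" "l < card A"
    then show "f (ys ! l) \<le> f (ys ! k)"
      using sorted_nth_mono[OF ys(3), of k l] len by simp
  qed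
qed

lemma bij_betw_lessThan_append:
  fixes a b :: nat
  assumes u: "bij_betw u {..<a} A" and v: "bij_betw v {..<b} B" and "A \<inter> B = {}"
  defines "w \<equiv> \<lambda>k. if k < a then u k else v (k - a)"
  shows "bij_betw w {..<a + b} (A \<union> B)" and "w ` {..<a} = A" and "w ` {a..<a + b} = B"
proof -
  have wA: "bij_betw w {..<a} A"
    using u by (subst bij_betw_cong[where g = u]) (simp_all add: w_def)
  have "bij_betw (\<lambda>k. k - a) {a..<a + b} {..<b}"
    by (rule bij_betw_byWitness[where f' = "\<lambda>k. k + a"]) auto
  then have "bij_betw (\<lambda>k. v (k - a)) {a..<a + b} B"
    using bij_betw_trans[OF _ v] by (simp add: comp_def)
  then have wB: "bij_betw w {a..<a + b} B"
    by (subst bij_betw_cong[where g = "\<lambda>k. v (k - a)"]) (simp_all add: w_def)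
  have "{..<a + b} = {..<a} \<union> {a..<a + b}"
    by auto
  then show "bij_betw w {..<a + b} (A \<union> B)"
    using bij_betw_combine[OF wA wB \<open>A \<inter> B = {}\<close>] by simp
  show "w ` {..<a} = A" "w ` {a..<a + b} = B"
    using wA wB by (simp_all add: bij_betw_def)
qed

lemma obtain_enumeration_Un:
  fixes f :: "'a \<Rightarrow> real"
  assumes "finite A" and "finite B" and "A \<inter> B = {}"
  obtains w where "bij_betw w {..<card A + card B} (A \<union> B)"
    and "w ` {..<card A} = A" and "w ` {card A..<card A + card B} = B"
    and "\<And>k l. k \<le> l \<Longrightarrow> l < card A \<Longrightarrow> f (w l) \<le> f (w k)"
proof -
  obtain u where u: "bij_betw u {..<card A} A"
    and sorted: "\<And>k l. k \<le> l \<Longrightarrow> l < card A \<Longrightarrow> f (u l) \<le> f (u k)"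
    using obtain_sorted_enumeration[OF assms(1)] by blast
  obtain v where v: "bij_betw v {..<card B} B"
    using ex_bij_betw_nat_finite[OF assms(2)] by (auto simp: atLeast0LessThan)
  define w where "w k = (if k < card A then u k else v (k - card A))" for k
  have "bij_betw w {..<card A + card B} (A \<union> B)"
    and "w ` {..<card A} = A" and "w ` {card A..<card A + card B} = B"
    using bij_betw_lessThan_append[OF u v assms(3)] unfolding w_def[abs_def] by simp_all
  moreover have "f (w l) \<le> f (w k)" if "k \<le> l" "l < card A" for k l
    using sorted[OF that] that by (simp add: w_def)
  ultimately show thesis
    by (rule that)
qed

lemma ordered_sigma_orthogonal_gen_eigenbasis:
  fixes H :: "real^'d^'n" and S :: "real^'n^'n" and G :: "real^'d^'d" and f :: "real \<Rightarrow> real"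
  assumes S: "spd S" and G: "psd G"
  defines "C \<equiv> H ** G ** transpose H"
    and "RanSH \<equiv> range (\<lambda>x. matrix_inv S *v (H *v x))"
    and "KerHT \<equiv> {w. transpose H *v w = 0}"
    and "h \<equiv> rank H" and "n \<equiv> CARD('n)"
  obtains w where "inj_on w {..<n}" "independent (w ` {..<n})" "span (w ` {..<n}) = UNIV"
    and "\<And>k l. k < n \<Longrightarrow> l < n \<Longrightarrow> k \<noteq> l \<Longrightarrow> w k \<bullet> (S *v w l) = 0"
    and "\<And>k. k < n \<Longrightarrow> w k \<noteq> 0 \<and> C *v w k = gen_rayleigh C S (w k) *\<^sub>R (S *v w k)"
    and "h \<le> n" "span (w ` {..<h}) = RanSH" "span (w ` {h..<n}) = KerHT"
    and "\<And>k l. k \<le> l \<Longrightarrow> l < h \<Longrightarrow> f (gen_rayleigh C S (w l)) \<le> f (gen_rayleigh C S (w k))"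
proof -
  obtain B1 B2 where B1: "finite B1" "B1 \<subseteq> RanSH" "span B1 = RanSH" "card B1 = h"
    and B2: "finite B2" "B2 \<subseteq> KerHT" "span B2 = KerHT" "card B2 + h = n"
    and disj: "B1 \<inter> B2 = {}" and orth: "pairwise (\<lambda>x z. x \<bullet> (S *v z) = 0) (B1 \<union> B2)"
    and eig: "\<And>x. x \<in> B1 \<union> B2 \<Longrightarrow> x \<noteq> 0 \<and> C *v x = gen_rayleigh C S x *\<^sub>R (S *v x)"
    by (rule sigma_orthogonal_gen_eigenbasis_range_kernel[OF S G, of H,
        folded C_def RanSH_def KerHT_def h_def n_def]) (rule that)
  have n: "h + card B2 = n"
    using B2(4) by simp
  obtain w where bij: "bij_betw w {..<n} (B1 \<union> B2)"
    and img: "w ` {..<h} = B1" "w ` {h..<n} = B2"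
    and sorted: "\<And>k l. k \<le> l \<Longrightarrow> l < h \<Longrightarrow>
      f (gen_rayleigh C S (w l)) \<le> f (gen_rayleigh C S (w k))"
    by (rule obtain_enumeration_Un[OF B1(1) B2(1) disj, of "\<lambda>x. f (gen_rayleigh C S x)",
        unfolded B1(4) n]) (rule that)
  have "0 \<notin> B1 \<union> B2"
    using eig by blast
  then have indep: "independent (B1 \<union> B2)"
    using sigma_orthogonal_independent[OF S _ _ orth] B1(1) B2(1) by simp
  have "card (B1 \<union> B2) = n"
    using card_Un_disjoint[OF B1(1) B2(1) disj] B1(4) n by simp
  then have span: "span (B1 \<union> B2) = UNIV"
    using card_ge_dim_independent[of "B1 \<union> B2" UNIV] indep unfolding n_def by auto
  have w_inj: "w k \<noteq> w l" if "k < n" "l < n" "k \<noteq> l" for k l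
    using bij that by (auto simp: bij_betw_def inj_on_def)
  have wB: "w k \<in> B1 \<union> B2" if "k < n" for k
    using bij that by (auto simp: bij_betw_def)
  show thesis
  proof (rule that)
    show "inj_on w {..<n}" "independent (w ` {..<n})" "span (w ` {..<n}) = UNIV"
      using bij indep span by (simp_all add: bij_betw_def)
    show "h \<le> n" "span (w ` {..<h}) = RanSH" "span (w ` {h..<n}) = KerHT"
      using n B1(4) img B1(3) B2(3) by simp_all
  qed (use pairwiseD(1)[OF orth wB wB] w_inj eig wB sorted in auto)
qed

lemma down_closed_eq_lessThan:
  fixes P :: "nat set"
  assumes "finite P" and down: "\<And>k l. k \<le> l \<Longrightarrow> l \<in> P \<Longrightarrow> k \<in> P"
  shows "P = {..<card P}"
proof (cases "P = {}")
  case False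
  then have "Max P \<in> P"
    using Max_in[OF assms(1)] by blast
  then have "P = {..Max P}"
    using down Max_ge[OF assms(1)] by auto
  then show ?thesis
    by (metis card_atMost lessThan_Suc_atMost)
qed simp

lemma positive_indices_initial_segment:
  fixes e :: "nat \<Rightarrow> real" and f :: "real \<Rightarrow> real"
  assumes "h \<le> n" and nonneg: "\<And>k. k < n \<Longrightarrow> 0 \<le> e k"
    and tail: "\<And>k. h \<le> k \<Longrightarrow> k < n \<Longrightarrow> e k = 0"
    and sorted: "\<And>k l. k \<le> l \<Longrightarrow> l < h \<Longrightarrow> f (e l) \<le> f (e k)"
    and f_pos: "\<And>x. 0 \<le> x \<Longrightarrow> 0 < f x \<longleftrightarrow> 0 < x"
  obtains r where "r \<le> h" and "{k. k < n \<and> 0 < e k} = {..<r}"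
proof -
  define P where "P = {k. k < n \<and> 0 < e k}"
  have P_h: "P \<subseteq> {..<h}"
  proof
    fix k
    assume "k \<in> P"
    then have "k < n" "e k \<noteq> 0"
      by (auto simp: P_def)
    then show "k \<in> {..<h}"
      using tail[of k] by (cases "h \<le> k") auto
  qed
  have "k \<in> P" if "k \<le> l" "l \<in> P" for k l
  proof -
    have "l < h" "0 < f (e l)"
      using that(2) P_h nonneg f_pos by (auto simp: P_def)
    then have "0 < f (e k)"
      using sorted[OF that(1)] by linarith
    then show ?thesis
      using that \<open>l < h\<close> \<open>h \<le> n\<close> nonneg f_pos by (auto simp: P_def)
  qed
  then have "P = {..<card P}"
    using down_closed_eq_lessThan finite_subset[OF P_h] by blast
  moreover have "card P \<le> h"
    using card_mono[OF _ P_h] by simp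
  ultimately show thesis
    using that unfolding P_def by metis
qed

lemma eki_ordered_gen_eigenbasis:
  fixes H :: "real^'d^'n" and S :: "real^'n^'n" and y :: "real^'n"
    and v0 :: "'j::finite \<Rightarrow> real^'d"
  assumes S: "spd S"
  defines "\<Gamma> \<equiv> eki_cov H S y v0"
    and "n \<equiv> CARD('n)"
    and "h \<equiv> rank H"
    and "RanSH \<equiv> range (\<lambda>x. matrix_inv S *v (H *v x))"
    and "KerHT \<equiv> {w. transpose H *v w = 0}"
  obtains w e r where "inj_on w {..<n}" "independent (w ` {..<n})" "span (w ` {..<n}) = UNIV"
    and "\<And>k l. k < n \<Longrightarrow> l < n \<Longrightarrow> k \<noteq> l \<Longrightarrow> w k \<bullet> (S *v w l) = 0"
    and "\<And>k i. k < n \<Longrightarrow>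
      (H ** \<Gamma> i ** transpose H) *v w k = (eki_eig_map ^^ i) (e k) *\<^sub>R (S *v w k)"
    and "\<And>k. k < n \<Longrightarrow> 0 \<le> e k" and "r \<le> h" and "{k. k < n \<and> 0 < e k} = {..<r}"
    and "\<And>k l. k \<le> l \<Longrightarrow> l < r \<Longrightarrow> eki_eig_map (e l) \<le> eki_eig_map (e k)"
    and "h \<le> n" "span (w ` {..<h}) = RanSH" "span (w ` {h..<n}) = KerHT"
proof -
  define C where "C = H ** \<Gamma> 0 ** transpose H"
  have "psd (\<Gamma> 0)"
    by (simp add: \<Gamma>_def eki_cov_def psd_emp_cov)
  then have "psd C"
    unfolding C_def by (rule psd_congruence)
  obtain w where basis: "inj_on w {..<n}" "independent (w ` {..<n})" "span (w ` {..<n}) = UNIV"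
    and orth: "\<And>k l. k < n \<Longrightarrow> l < n \<Longrightarrow> k \<noteq> l \<Longrightarrow> w k \<bullet> (S *v w l) = 0"
    and eig: "\<And>k. k < n \<Longrightarrow> w k \<noteq> 0 \<and> C *v w k = gen_rayleigh C S (w k) *\<^sub>R (S *v w k)"
    and spans: "h \<le> n" "span (w ` {..<h}) = RanSH" "span (w ` {h..<n}) = KerHT"
    and sorted: "\<And>k l. k \<le> l \<Longrightarrow> l < h \<Longrightarrow>
      eki_eig_map (gen_rayleigh C S (w l)) \<le> eki_eig_map (gen_rayleigh C S (w k))"
    by (rule ordered_sigma_orthogonal_gen_eigenbasis[OF S \<open>psd (\<Gamma> 0)\<close>, of H eki_eig_map,
        folded C_def RanSH_def KerHT_def h_def n_def]) (rule that)
  define e where "e k = gen_rayleigh C S (w k)" for k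
  have nonneg: "0 \<le> e k" if "k < n" for k
    unfolding e_def using eig[OF that] by (intro psd_gen_eigenvalue_nonneg[OF \<open>psd C\<close> S]) auto
  have tail: "e k = 0" if "h \<le> k" "k < n" for k
  proof -
    have "w k \<in> KerHT"
      using that spans(3) span_base[of "w k" "w ` {h..<n}"] by simp
    then show ?thesis
      by (simp add: e_def gen_rayleigh_def C_def KerHT_def flip: matrix_vector_mul_assoc)
  qed
  have sorted_e: "eki_eig_map (e l) \<le> eki_eig_map (e k)" if "k \<le> l" "l < h" for k l
    using sorted[OF that] by (simp add: e_def)
  obtain r where "r \<le> h" and r: "{k. k < n \<and> 0 < e k} = {..<r}"
    using positive_indices_initial_segment[of h n e eki_eig_map] spans(1) nonneg tail sorted_e
      eki_eig_map_pos_iff by blast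
  have evol: "(H ** \<Gamma> i ** transpose H) *v w k = (eki_eig_map ^^ i) (e k) *\<^sub>R (S *v w k)"
    if "k < n" for k i
  proof -
    have "w k \<noteq> 0" "(H ** eki_cov H S y v0 0 ** transpose H) *v w k = e k *\<^sub>R (S *v w k)"
      using eig[OF that] by (simp_all add: e_def C_def \<Gamma>_def)
    then show ?thesis
      unfolding \<Gamma>_def by (rule eki_gen_eig_evolution[OF S])
  qed
  have sorted_r: "eki_eig_map (e l) \<le> eki_eig_map (e k)" if "k \<le> l" "l < r" for k l
    using sorted_e[OF that(1)] that(2) \<open>r \<le> h\<close> by simp
  show thesis
    by (rule that[of w e r]) (simp_all add: basis orth evol nonneg \<open>r \<le> h\<close> r sorted_r spans)
qed

lemma funpow_eki_eig_map_initial_segment: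
  fixes e :: "nat \<Rightarrow> real"
  assumes nonneg: "\<And>k. k < n \<Longrightarrow> 0 \<le> e k" and r: "{k. k < n \<and> 0 < e k} = {..<r}" and "r \<le> n"
  shows "k < r \<Longrightarrow> 0 < (eki_eig_map ^^ i) (e k)"
    and "r \<le> k \<Longrightarrow> k < n \<Longrightarrow> (eki_eig_map ^^ i) (e k) = 0"
proof -
  show "0 < (eki_eig_map ^^ i) (e k)" if "k < r"
    using that r \<open>r \<le> n\<close> by (intro funpow_eki_eig_map_pos) auto
  show "(eki_eig_map ^^ i) (e k) = 0" if "r \<le> k" "k < n"
  proof -
    have "k \<notin> {k. k < n \<and> 0 < e k}"
      using that(1) r by simp
    then have "\<not> 0 < e k"
      using that(2) by simp
    then show ?thesis
      using nonneg[OF that(2)] funpow_eki_eig_map_zero by (simp add: not_less)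
  qed
qed

theorem proposition3p2:
  fixes H :: "real^'d^'n" and S :: "real^'n^'n" and y :: "real^'n"
    and v0 :: "'j::finite \<Rightarrow> real^'d"
  assumes "spd S"
    and "CARD('j) \<ge> 2"
  defines "\<Gamma> \<equiv> eki_cov H S y v0"
    and "n \<equiv> CARD('n)"
    and "h \<equiv> rank H"
    and "RanSH \<equiv> range (\<lambda>x. matrix_inv S *v (H *v x))"
    and "KerHT \<equiv> {w. transpose H *v w = 0}"
  shows
    "(\<forall>w \<delta>0. w \<noteq> 0 \<longrightarrow> (H ** \<Gamma> 0 ** transpose H) *v w = \<delta>0 *\<^sub>R (S *v w) \<longrightarrow>
        (\<exists>\<delta>::nat \<Rightarrow> real. \<delta> 0 = \<delta>0 \<and>
           (\<forall>i. (H ** \<Gamma> i ** transpose H) *v w = \<delta> i *\<^sub>R (S *v w)) \<and>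
           (\<delta>0 = 0 \<longrightarrow> (\<forall>i\<ge>1. \<delta> i = 0)) \<and>
           (\<delta>0 > 0 \<longrightarrow> (\<forall>i\<ge>1. \<delta> i > 0))))
   \<and>
    (\<exists>(w :: nat \<Rightarrow> real^'n) (\<delta> :: nat \<Rightarrow> nat \<Rightarrow> real) r.
        inj_on w {..<n} \<and> independent (w ` {..<n}) \<and> span (w ` {..<n}) = UNIV
      \<and> (\<forall>k<n. \<forall>l<n. k \<noteq> l \<longrightarrow> w k \<bullet> (S *v w l) = 0)
      \<and> (\<forall>k<n. \<forall>i. (H ** \<Gamma> i ** transpose H) *v w k = \<delta> k i *\<^sub>R (S *v w k))
      \<and> r = card {k. k < n \<and> \<delta> k 0 > 0}
      \<and> r \<le> h
      \<and> (\<forall>k<r. w k \<in> RanSH \<and> (\<forall>i. \<delta> k i > 0))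
      \<and> (\<forall>i\<ge>1. \<forall>k l. k \<le> l \<and> l < r \<longrightarrow> \<delta> l i \<le> \<delta> k i)
      \<and> (\<forall>k. r \<le> k \<and> k < h \<longrightarrow> w k \<in> RanSH \<and> (\<forall>i. \<delta> k i = 0))
      \<and> (\<forall>k. h \<le> k \<and> k < n \<longrightarrow> w k \<in> KerHT \<and> (\<forall>i. \<delta> k i = 0))
      \<and> span (w ` {..<h}) = RanSH
      \<and> span (w ` {h..<n}) = KerHT)"
proof (rule conjI, goal_cases persistence basis)
  \<comment> \<open>The hypothesis \<open>CARD('j) \<ge> 2\<close> is not needed: for \<open>J = 1\<close> the factor \<open>1 / (J - 1)\<close> in
    \<open>emp_cov\<close> is the junk value \<open>1 / 0 = 0\<close>, and \<open>psd_emp_cov\<close> holds for every \<open>J\<close>.\<close>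
  case persistence
  show ?case
    unfolding \<Gamma>_def by (intro allI impI eki_gen_eigenvalue_persistence[OF assms(1)])
next
  case basis
  obtain w e r where basis: "inj_on w {..<n}" "independent (w ` {..<n})" "span (w ` {..<n}) = UNIV"
    and orth: "\<And>k l. k < n \<Longrightarrow> l < n \<Longrightarrow> k \<noteq> l \<Longrightarrow> w k \<bullet> (S *v w l) = 0"
    and evol: "\<And>k i. k < n \<Longrightarrow>
      (H ** \<Gamma> i ** transpose H) *v w k = (eki_eig_map ^^ i) (e k) *\<^sub>R (S *v w k)"
    and nonneg: "\<And>k. k < n \<Longrightarrow> 0 \<le> e k" and "r \<le> h" and r: "{k. k < n \<and> 0 < e k} = {..<r}"
    and sorted: "\<And>k l. k \<le> l \<Longrightarrow> l < r \<Longrightarrow> eki_eig_map (e l) \<le> eki_eig_map (e k)"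
    and spans: "h \<le> n" "span (w ` {..<h}) = RanSH" "span (w ` {h..<n}) = KerHT"
    by (rule eki_ordered_gen_eigenbasis[OF assms(1), of H y v0, folded \<Gamma>_def n_def h_def RanSH_def
        KerHT_def]) (rule that)
  define \<delta> where "\<delta> k i = (eki_eig_map ^^ i) (e k)" for k i
  have "r \<le> n"
    using \<open>r \<le> h\<close> spans(1) by simp
  note \<delta> = funpow_eki_eig_map_initial_segment[OF nonneg r this, folded \<delta>_def]
  have Ran: "w k \<in> RanSH" if "k < h" for k
    using that spans(2) span_base[of "w k" "w ` {..<h}"] by simp
  have Ker: "w k \<in> KerHT" if "h \<le> k" "k < n" for k
    using that spans(3) span_base[of "w k" "w ` {h..<n}"] by simp
  show ?case
  proof (intro exI[of _ w] exI[of _ \<delta>] exI[of _ r] conjI allI impI)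
    show "r = card {k. k < n \<and> 0 < \<delta> k 0}"
      using r by (simp add: \<delta>_def)
  next
    fix i k l :: nat
    assume "1 \<le> i" "k \<le> l \<and> l < r"
    then show "\<delta> l i \<le> \<delta> k i"
      unfolding \<delta>_def using sorted nonneg \<open>r \<le> n\<close> by (intro funpow_eki_eig_map_order) auto
  qed (use basis orth evol spans Ran Ker \<delta> \<open>r \<le> h\<close> in \<open>auto simp: \<delta>_def\<close>)
qed

end
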